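(* Let $n\ge 1$ and let $\mathcal{M}^n$ denote the set of real symmetric positive semidefinite $n\times n$ matrices. Let $F:(\mathcal{M}^n)^n\to\mathbb{R}$ be a nonnegative function which is additive in each variable (i.e. $F(\dots,A+A',\dots)=F(\dots,A,\dots)+F(\dots,A',\dots)$ in each argument, the others fixed). If there is a constant $c$ such that $F(A_1,\dots,A_n)\le c\,D(A_1,\dots,A_n)$ for all $A_1,\dots,A_n\in\mathcal{M}^n$, then there is a constant $a$ with $F=a\,D$ on $(\mathcal{M}^n)^n$, where $D$ is the mixed discriminant.
   Context: The mixed discriminant $D:(\mathcal{M}^n)^n\to\mathbb{R}$ is the unique symmetric function such that $\det(\lambda_1A_1+\dots+\lambda_mA_m)=\sum_{i_1,\dots,i_n=1}^m\lambda_{i_1}\cdots\lambda_{i_n}D(A_{i_1},\dots,A_{i_n})$ for all $m\in\mathbb{N}$, $A_1,\dots,A_m\in\mathcal{M}^n$ and $\lambda_1,\dots,\lambda_m\ge 0$. *)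

theory Defs
  imports "HOL-Analysis.Analysis"
begin

text \<open>Real symmetric positive semidefinite n x n matrices (the set M^n); the
  dimension n is the cardinality of the finite index type 'n.\<close>
definition psd :: "real^'n^'n \<Rightarrow> bool" where
  "psd A \<longleftrightarrow> transpose A = A \<and> (\<forall>x. 0 \<le> x \<bullet> (A *v x))"

definition psd_tuple :: "('n \<Rightarrow> real^'n^'n) \<Rightarrow> bool" where
  "psd_tuple A \<longleftrightarrow> (\<forall>k. psd (A k))"

definition is_mixed_discr :: "(('n::finite \<Rightarrow> real^'n^'n) \<Rightarrow> real) \<Rightarrow> bool" where
  "is_mixed_discr D \<longleftrightarrow>
     (\<forall>A p. psd_tuple A \<and> p permutes (UNIV::'n set) \<longrightarrow> D (A \<circ> p) = D A) \<and>
     (\<forall>(m::nat) (A::nat \<Rightarrow> real^'n^'n) (lam::nat \<Rightarrow> real).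
        (\<forall>j<m. psd (A j)) \<and> (\<forall>j<m. 0 \<le> lam j) \<longrightarrow>
        det (\<Sum>j<m. lam j *\<^sub>R A j) =
          (\<Sum>f\<in>{f::'n \<Rightarrow> nat. \<forall>k. f k < m}. (\<Prod>k\<in>UNIV. lam (f k)) * D (\<lambda>k. A (f k))))"

text \<open>The mixed discriminant (unique on (M^n)^n).\<close>
definition mixed_discr :: "('n::finite \<Rightarrow> real^'n^'n) \<Rightarrow> real" where
  "mixed_discr = (SOME D. is_mixed_discr D)"

end

theory Submission
  imports Defs
begin

text \<open>
  Every positive semidefinite matrix is a sum of rank-one matrices \<open>u u\<^sup>T\<close>, so by
  multiadditivity \<open>F\<close> is determined by \<open>G v = F (v\<^sub>1 v\<^sub>1\<^sup>T, \<dots>, v\<^sub>n v\<^sub>n\<^sup>T)\<close>.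
  Additivity and nonnegativity make \<open>F\<close> positively homogeneous in each argument, so \<open>G\<close>
  scales by \<open>t\<^sup>2\<close> when one row is multiplied by \<open>t\<close> and satisfies the parallelogram law in
  each row; the bound \<open>F \<le> c D\<close> makes \<open>G\<close> vanish on linearly dependent rows. Along a shear
  \<open>v\<^sub>m \<mapsto> v\<^sub>m + s v\<^sub>n\<close> the parallelogram law becomes Jensen's equation, whose nonnegative
  solutions are constant; hence \<open>G\<close> is invariant under row operations and Gaussian elimination
  gives \<open>G v = det(v)\<^sup>2 G(e)\<close>. The mixed discriminant is multiadditive with the value
  \<open>det(v)\<^sup>2 / n!\<close> on the same tuples: by polarization it agrees on positive semidefinite
  tuples with the average over permutations \<open>\<sigma>\<close> of \<open>det\<close> of the matrix whose \<open>i\<close>-th row is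
  the \<open>i\<close>-th row of \<open>A\<^sub>\<sigma>\<^sub>(\<^sub>i\<^sub>)\<close>.
\<close>

section \<open>Positive semidefinite matrices\<close>

lemma psd_symmetric: "psd A \<Longrightarrow> A $ i $ j = A $ j $ i"
  unfolding psd_def by (metis transpose_def vec_lambda_beta)

lemma psd_zero [simp]: "psd (0::real^'n::finite^'n)"
  by (simp add: psd_def vec_eq_iff transpose_def)

lemma psd_add: "psd A \<Longrightarrow> psd B \<Longrightarrow> psd (A + B)"
  unfolding psd_def
  by (auto simp: vec_eq_iff transpose_def matrix_vector_mult_add_rdistrib inner_add_right)

lemma psd_scaleR: "0 \<le> t \<Longrightarrow> psd A \<Longrightarrow> psd (t *\<^sub>R A)"
  unfolding psd_def
  by (auto simp: transpose_scalar scaleR_matrix_vector_assoc[symmetric])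

lemma psd_sum_list: "(\<And>u. u \<in> set us \<Longrightarrow> psd (P u)) \<Longrightarrow> psd (\<Sum>u\<leftarrow>us. P u)"
  by (induction us) (auto intro: psd_add)

definition outer :: "real^'n \<Rightarrow> real^'n^'n" where
  "outer u = (\<chi> i. u $ i *\<^sub>R u)"

lemma outer_nth [simp]: "outer u $ i $ j = u $ i * u $ j"
  by (simp add: outer_def)

lemma outer_mult_vec: "outer u *v x = (u \<bullet> x) *\<^sub>R u"
  by (simp add: vec_eq_iff outer_def matrix_vector_mult_def inner_vec_def sum_distrib_left mult_ac)

lemma psd_outer: "psd (outer (u::real^'n::finite))"
  by (simp add: psd_def vec_eq_iff transpose_def outer_mult_vec mult.commute inner_commute)

lemma outer_scaleR: "outer (t *\<^sub>R u) = t\<^sup>2 *\<^sub>R outer u"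
  by (simp add: vec_eq_iff power2_eq_square)

lemma outer_parallelogram: "outer (a + b) + outer (a - b) = 2 *\<^sub>R outer a + 2 *\<^sub>R outer b"
  by (simp add: vec_eq_iff algebra_simps)

lemma inner_axis_mult_vec_axis [simp]: "axis i 1 \<bullet> (A *v axis j 1) = A $ i $ j"
  for A :: "real^'n::finite^'n"
  by (simp add: inner_axis' matrix_vector_mult_basis column_def)

lemma inner_axis_mult_vec: "axis i 1 \<bullet> (A *v x) = A $ i \<bullet> x"
  for A :: "real^'n::finite^'n"
  unfolding inner_axis' by (simp add: matrix_vector_mult_def inner_vec_def mult.commute)

lemma psd_diagonal_nonneg: "psd A \<Longrightarrow> 0 \<le> A $ i $ i"
  unfolding psd_def by (metis inner_axis_mult_vec_axis)

lemma quadratic_form_add_scaleR: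
  fixes A :: "real^'n::finite^'n"
  assumes "transpose A = A"
  shows "(x + t *\<^sub>R y) \<bullet> (A *v (x + t *\<^sub>R y)) =
    x \<bullet> (A *v x) + 2 * t * (y \<bullet> (A *v x)) + t\<^sup>2 * (y \<bullet> (A *v y))"
proof -
  have "x \<bullet> (A *v y) = y \<bullet> (A *v x)"
    by (metis assms dot_lmul_matrix inner_commute transpose_matrix_vector)
  then show ?thesis
    by (simp add: matrix_vector_right_distrib matrix_vector_mult_scaleR inner_add_left
        inner_add_right power2_eq_square algebra_simps)
qed

lemma psd_diagonal_zero_row:
  assumes A: "psd A" and zero: "A $ i $ i = 0"
  shows "A $ i $ j = 0"
proof (rule ccontr)
  assume nz: "A $ i $ j \<noteq> 0"
  define t where "t = - (A $ j $ j + 1) / (2 * A $ i $ j)"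
  have "0 \<le> (axis j 1 + t *\<^sub>R axis i 1) \<bullet> (A *v (axis j 1 + t *\<^sub>R axis i 1))"
    using A by (simp add: psd_def)
  also have "\<dots> = A $ j $ j + 2 * t * A $ i $ j"
    using A zero by (simp add: quadratic_form_add_scaleR psd_def)
  also have "\<dots> = -1"
    using nz by (simp add: t_def field_simps)
  finally show False by simp
qed

text \<open>The Schur complement of a diagonal entry; for a zero diagonal entry the junk value
  \<open>1 / 0 = 0\<close> leaves \<open>A\<close> unchanged.\<close>
lemma psd_schur_complement:
  assumes A: "psd A"
  shows "psd (A - (1 / A $ i $ i) *\<^sub>R outer (A $ i))"
proof -
  let ?a = "A $ i $ i" and ?u = "A $ i"
  have "transpose (A - (1 / ?a) *\<^sub>R outer ?u) = A - (1 / ?a) *\<^sub>R outer ?u"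
    using psd_symmetric[OF A] by (simp add: vec_eq_iff transpose_def mult.commute)
  moreover have "0 \<le> x \<bullet> ((A - (1 / ?a) *\<^sub>R outer ?u) *v x)" for x
  proof (cases "?a = 0")
    case True
    then show ?thesis using A by (simp add: psd_def)
  next
    case False
    define s where "s = (?u \<bullet> x) / ?a"
    have "0 \<le> (x + (- s) *\<^sub>R axis i 1) \<bullet> (A *v (x + (- s) *\<^sub>R axis i 1))"
      using A by (simp add: psd_def)
    also have "\<dots> = x \<bullet> (A *v x) - 2 * s * (?u \<bullet> x) + s\<^sup>2 * ?a"
      using A quadratic_form_add_scaleR[of A x "- s" "axis i 1"]
      by (simp add: psd_def inner_axis_mult_vec inner_axis del: scaleR_minus_left)
    also have "\<dots> = x \<bullet> (A *v x) - (?u \<bullet> x)\<^sup>2 / ?a"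
      using False by (simp add: s_def power2_eq_square field_simps)
    also have "\<dots> = x \<bullet> ((A - (1 / ?a) *\<^sub>R outer ?u) *v x)"
      by (simp add: matrix_vector_mult_diff_rdistrib outer_mult_vec inner_diff_right
          power2_eq_square inner_commute flip: scaleR_matrix_vector_assoc)
    finally show ?thesis .
  qed
  ultimately show ?thesis by (simp add: psd_def)
qed

lemma psd_eq_sum_outer_supported:
  fixes A :: "real^'n::finite^'n"
  assumes "finite K" "psd A" "\<And>p q. p \<notin> K \<or> q \<notin> K \<Longrightarrow> A $ p $ q = 0"
  shows "\<exists>us. A = (\<Sum>u\<leftarrow>us. outer u)"
  using assms
proof (induction K arbitrary: A rule: finite_induct)
  case empty
  then have "A = (\<Sum>u\<leftarrow>[]. outer u)" by (simp add: vec_eq_iff)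
  then show ?case by blast
next
  case (insert i K)
  define w where "w = (1 / sqrt (A $ i $ i)) *\<^sub>R A $ i"
  have w: "outer w = (1 / A $ i $ i) *\<^sub>R outer (A $ i)"
    using psd_diagonal_nonneg[OF insert.prems(1)]
    by (simp add: w_def outer_scaleR power_divide)
  have entry: "(A - outer w) $ p $ q = A $ p $ q - A $ i $ p * A $ i $ q / A $ i $ i" for p q
    by (simp add: w)
  have row_i: "(A - outer w) $ i $ q = 0" for q
    unfolding entry using psd_diagonal_zero_row[OF insert.prems(1), of i q] by auto
  have "(A - outer w) $ p $ q = 0" if "p \<notin> K \<or> q \<notin> K" for p q
  proof (cases "p = i \<or> q = i")
    case True
    then show ?thesis
      using row_i[of p] row_i[of q] psd_symmetric[OF insert.prems(1), of p i]
      unfolding entry by auto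
  next
    case False
    then show ?thesis
      using that insert.prems(2)[of p q] insert.prems(2)[of i p] insert.prems(2)[of i q]
      unfolding entry by auto
  qed
  then obtain us where "A - outer w = (\<Sum>u\<leftarrow>us. outer u)"
    using insert.IH psd_schur_complement[OF insert.prems(1), of i] w by fastforce
  then have "A = (\<Sum>u\<leftarrow>w # us. outer u)" by (simp add: algebra_simps)
  then show ?case by blast
qed

lemma psd_eq_sum_outer: "psd A \<Longrightarrow> \<exists>us. A = (\<Sum>u\<leftarrow>us. outer u)"
  for A :: "real^'n::finite^'n"
  using psd_eq_sum_outer_supported[of UNIV A] by simp

lemma psd_tuple_outer: "psd_tuple (\<lambda>k. outer (v k))"
  by (simp add: psd_tuple_def psd_outer)

lemma outer_fun_upd: "(\<lambda>j. outer ((v(k := w)) j)) = (\<lambda>j. outer (v j))(k := outer w)"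
  by auto

lemma psd_tuple_upd: "psd_tuple A \<Longrightarrow> psd X \<Longrightarrow> psd_tuple (A(k := X))"
  by (simp add: psd_tuple_def)

section \<open>The mixed discriminant as an average of determinants\<close>

definition mixed_det :: "('n::finite \<Rightarrow> real^'n^'n) \<Rightarrow> real" where
  "mixed_det A = det (\<chi> i. A i $ i)"

definition mixed_discr_expl :: "('n::finite \<Rightarrow> real^'n^'n) \<Rightarrow> real" where
  "mixed_discr_expl A = (\<Sum>\<sigma> | \<sigma> permutes (UNIV::'n set). mixed_det (A \<circ> \<sigma>)) / fact CARD('n)"

lemma mixed_discr_expl_permute:
  assumes "p permutes UNIV"
  shows "mixed_discr_expl (A \<circ> p) = mixed_discr_expl A"
  unfolding mixed_discr_expl_def
  using setum_permutations_compose_left[OF assms, of "\<lambda>\<sigma>. mixed_det (A \<circ> \<sigma>)"]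
  by (simp add: comp_assoc)

lemma det_rows_sum_expand:
  fixes a :: "'n::finite \<Rightarrow> 'b \<Rightarrow> real^'n"
  assumes "finite S"
  shows "det (\<chi> i. \<Sum>j\<in>S. a i j) = (\<Sum>g\<in>UNIV \<rightarrow>\<^sub>E S. det (\<chi> i. a i (g i)))"
proof -
  have "det (\<chi> i. \<Sum>j\<in>S. a i j) = (\<Sum>p | p permutes (UNIV::'n set). of_int (sign p) *
      (\<Sum>g\<in>UNIV \<rightarrow>\<^sub>E S. \<Prod>i\<in>UNIV. a i (g i) $ p i))"
    unfolding det_def
    by (intro sum.cong refl arg_cong2[where f="(*)"])
      (simp add: sum_component prod_sum_PiE[OF finite assms])
  also have "\<dots> = (\<Sum>g\<in>UNIV \<rightarrow>\<^sub>E S. det (\<chi> i. a i (g i)))"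
    unfolding det_def by (simp add: sum_distrib_left sum.swap[of _ "{p. p permutes UNIV}"])
  finally show ?thesis .
qed

lemma det_sum_scaleR_expand:
  fixes A :: "nat \<Rightarrow> real^'n::finite^'n"
  shows "det (\<Sum>j<m. lam j *\<^sub>R A j) =
    (\<Sum>g | \<forall>k. g k < m. (\<Prod>k\<in>UNIV. lam (g k)) * mixed_det (\<lambda>k. A (g k)))"
proof -
  have "(\<Sum>j<m. lam j *\<^sub>R A j) = (\<chi> i. \<Sum>j\<in>{..<m}. lam j *s A j $ i)"
    by (simp add: vec_eq_iff scalar_mult_eq_scaleR)
  moreover have "UNIV \<rightarrow>\<^sub>E {..<m} = {g::'n \<Rightarrow> nat. \<forall>k. g k < m}"
    by (auto simp: PiE_def Pi_def extensional_def)
  ultimately show ?thesis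
    by (simp add: det_rows_sum_expand det_rows_mul mixed_det_def)
qed

lemma mixed_discr_expl_expand:
  fixes A :: "nat \<Rightarrow> real^'n::finite^'n"
  shows "det (\<Sum>j<m. lam j *\<^sub>R A j) =
    (\<Sum>g | \<forall>k. g k < m. (\<Prod>k\<in>UNIV. lam (g k)) * mixed_discr_expl (\<lambda>k. A (g k)))"
proof -
  let ?G = "{g::'n \<Rightarrow> nat. \<forall>k. g k < m}" and ?P = "{\<sigma>. \<sigma> permutes (UNIV::'n set)}"
  let ?T = "\<lambda>g. (\<Prod>k\<in>UNIV. lam (g k)) * mixed_det (\<lambda>k. A (g k))"
  have permuted: "(\<Sum>g\<in>?G. (\<Prod>k\<in>UNIV. lam (g k)) * mixed_det (\<lambda>k. A (g (\<sigma> k)))) = sum ?T ?G"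
    if \<sigma>: "\<sigma> permutes UNIV" for \<sigma>
  proof -
    have "(\<Sum>g\<in>?G. (\<Prod>k\<in>UNIV. lam (g k)) * mixed_det (\<lambda>k. A (g (\<sigma> k)))) = (\<Sum>g\<in>?G. ?T (g \<circ> \<sigma>))"
    proof (rule sum.cong[OF refl])
      fix g
      show "(\<Prod>k\<in>UNIV. lam (g k)) * mixed_det (\<lambda>k. A (g (\<sigma> k))) = ?T (g \<circ> \<sigma>)"
        using prod.permute[OF \<sigma>, of "\<lambda>k. lam (g k)"] by (simp add: o_def)
    qed
    also have "\<dots> = sum ?T ?G"
      by (rule sum.reindex_bij_witness[where i="\<lambda>g. g \<circ> inv \<sigma>" and j="\<lambda>g. g \<circ> \<sigma>"])
        (auto simp: o_def permutes_inverses[OF \<sigma>])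
    finally show ?thesis .
  qed
  have "(\<Sum>g\<in>?G. (\<Prod>k\<in>UNIV. lam (g k)) * mixed_discr_expl (\<lambda>k. A (g k))) =
    (\<Sum>\<sigma>\<in>?P. \<Sum>g\<in>?G. (\<Prod>k\<in>UNIV. lam (g k)) * mixed_det (\<lambda>k. A (g (\<sigma> k)))) / fact CARD('n)"
    by (simp add: mixed_discr_expl_def o_def sum_divide_distrib sum_distrib_left sum.swap[of _ ?G])
  also have "\<dots> = sum ?T ?G"
    by (simp add: permuted card_permutations)
  finally show ?thesis
    by (simp add: det_sum_scaleR_expand)
qed

lemma is_mixed_discr_expl: "is_mixed_discr (mixed_discr_expl :: ('n::finite \<Rightarrow> real^'n^'n) \<Rightarrow> real)"
  unfolding is_mixed_discr_def by (simp add: mixed_discr_expl_permute mixed_discr_expl_expand)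

lemma is_mixed_discr_mixed_discr: "is_mixed_discr (mixed_discr :: ('n::finite \<Rightarrow> real^'n^'n) \<Rightarrow> real)"
  unfolding mixed_discr_def by (rule someI[of _ mixed_discr_expl]) (rule is_mixed_discr_expl)

lemma is_mixed_discr_symmetric:
  "is_mixed_discr D \<Longrightarrow> psd_tuple A \<Longrightarrow> p permutes UNIV \<Longrightarrow> D (A \<circ> p) = D A"
  unfolding is_mixed_discr_def by blast

lemma is_mixed_discr_expand:
  fixes D :: "('n::finite \<Rightarrow> real^'n^'n) \<Rightarrow> real" and A :: "nat \<Rightarrow> real^'n^'n"
  assumes "is_mixed_discr D" "\<And>j. j < m \<Longrightarrow> psd (A j)" "\<And>j. j < m \<Longrightarrow> 0 \<le> lam j"
  shows "det (\<Sum>j<m. lam j *\<^sub>R A j) =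
    (\<Sum>g | \<forall>k. g k < m. (\<Prod>k\<in>UNIV. lam (g k)) * D (\<lambda>k. A (g k)))"
proof -
  have "\<forall>(m::nat) A lam. (\<forall>j<m. psd (A j)) \<and> (\<forall>j<m. 0 \<le> lam j) \<longrightarrow>
      det (\<Sum>j<m. lam j *\<^sub>R A j) =
        (\<Sum>g | \<forall>k. g k < m. (\<Prod>k\<in>UNIV. lam (g k)) * D (\<lambda>k. A (g k)))"
    using assms(1) unfolding is_mixed_discr_def by (rule conjunct2)
  then show ?thesis using assms(2,3) by blast
qed

lemma is_mixed_discr_expand_finite:
  fixes D :: "('n::finite \<Rightarrow> real^'n^'n) \<Rightarrow> real"
  assumes D: "is_mixed_discr D" and A: "psd_tuple A" and lam: "\<And>k. 0 \<le> lam k"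
  shows "det (\<Sum>k\<in>UNIV. lam k *\<^sub>R A k) = (\<Sum>\<phi>\<in>UNIV. (\<Prod>k\<in>UNIV. lam (\<phi> k)) * D (A \<circ> \<phi>))"
proof -
  define n where "n = CARD('n)"
  obtain h :: "'n \<Rightarrow> nat" where h: "bij_betw h UNIV {..<n}"
    using ex_bij_betw_finite_nat[of "UNIV::'n set"] by (auto simp: n_def atLeast0LessThan)
  define h' where "h' = inv_into UNIV h"
  have h'h: "h' (h k) = k" for k
    using h by (simp add: h'_def bij_betw_def)
  have hh': "j < n \<Longrightarrow> h (h' j) = j" for j
    using h by (simp add: h'_def bij_betw_inv_into_right)
  have h_less: "h k < n" for k
    using h by (auto simp: bij_betw_def)
  have "det (\<Sum>j<n. lam (h' j) *\<^sub>R A (h' j)) =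
    (\<Sum>g | \<forall>k. g k < n. (\<Prod>k\<in>UNIV. lam (h' (g k))) * D (\<lambda>k. A (h' (g k))))"
    using A lam by (intro is_mixed_discr_expand[OF D]) (simp_all add: psd_tuple_def)
  moreover have "(\<Sum>j<n. lam (h' j) *\<^sub>R A (h' j)) = (\<Sum>k\<in>UNIV. lam k *\<^sub>R A k)"
    using sum.reindex_bij_betw[OF h, of "\<lambda>j. lam (h' j) *\<^sub>R A (h' j)"] by (simp add: h'h)
  moreover have "(\<Sum>g | \<forall>k. g k < n. (\<Prod>k\<in>UNIV. lam (h' (g k))) * D (\<lambda>k. A (h' (g k)))) =
    (\<Sum>\<phi>\<in>UNIV. (\<Prod>k\<in>UNIV. lam (\<phi> k)) * D (A \<circ> \<phi>))"
    by (rule sum.reindex_bij_witness[where i="\<lambda>\<phi>. h \<circ> \<phi>" and j="\<lambda>g. h' \<circ> g"])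
      (auto simp: o_def hh' h'h h_less)
  ultimately show ?thesis by simp
qed

lemma alternating_sum_subsets_avoiding_range:
  fixes \<phi> :: "'a::finite \<Rightarrow> 'b::finite"
  shows "(\<Sum>X\<in>UNIV. (-1) ^ card X * (\<Prod>k\<in>UNIV. if \<phi> k \<in> X then 0 else 1 :: real)) =
    (if surj \<phi> then 1 else 0)"
proof -
  have avoid: "(\<Prod>k\<in>UNIV. if \<phi> k \<in> X then 0 else 1 :: real) =
      (\<Prod>x\<in>X. if x \<in> range \<phi> then 0 else 1)" for X
  proof (cases "X \<inter> range \<phi> = {}")
    case True
    then have "(\<Prod>k\<in>UNIV. if \<phi> k \<in> X then 0 else 1 :: real) = 1"
      and "(\<Prod>x\<in>X. if x \<in> range \<phi> then 0 else 1 :: real) = 1"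
      by (auto intro!: prod.neutral simp: disjoint_iff)
    then show ?thesis by simp
  next
    case False
    then obtain k where "\<phi> k \<in> X" by auto
    then have "(\<Prod>k\<in>UNIV. if \<phi> k \<in> X then 0 else 1 :: real) = 0"
      and "(\<Prod>x\<in>X. if x \<in> range \<phi> then 0 else 1 :: real) = 0"
      by (auto simp: prod_zero_iff)
    then show ?thesis by (simp only:)
  qed
  have "(\<Prod>x\<in>UNIV. 1 - (if x \<in> range \<phi> then 0 else 1 :: real)) =
      (\<Sum>X\<in>Pow UNIV. (-1) ^ card X * (\<Prod>x\<in>X. if x \<in> range \<phi> then 0 else 1) * (\<Prod>x\<in>UNIV - X. 1))"
    by (rule prod_diff_conv_sum) simp
  moreover have "(\<Prod>x\<in>UNIV. 1 - (if x \<in> range \<phi> then 0 else 1 :: real)) = (if surj \<phi> then 1 else 0)"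
    by (auto simp: prod_zero_iff)
  ultimately show ?thesis by (simp add: avoid)
qed

lemma permutes_UNIV_iff_surj: "p permutes (UNIV::'n::finite set) \<longleftrightarrow> surj p"
proof
  assume "surj p"
  then have "bij p" by (simp add: bij_def finite_UNIV_surj_inj)
  then show "p permutes UNIV" by (rule bij_imp_permutes) simp
qed (rule permutes_surj)

lemma is_mixed_discr_polarization:
  fixes D :: "('n::finite \<Rightarrow> real^'n^'n) \<Rightarrow> real"
  assumes D: "is_mixed_discr D" and A: "psd_tuple A"
  shows "fact CARD('n) * D A =
    (\<Sum>X\<in>Pow UNIV. (-1) ^ card X * det (\<Sum>k\<in>UNIV. (if k \<in> X then 0 else 1) *\<^sub>R A k))"
proof -
  have sym: "D (A \<circ> p) = D A" if "p permutes UNIV" for p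
    by (rule is_mixed_discr_symmetric[OF D A that])
  have "(\<Sum>X\<in>Pow UNIV. (-1) ^ card X * det (\<Sum>k\<in>UNIV. (if k \<in> X then 0 else 1) *\<^sub>R A k)) =
      (\<Sum>X\<in>Pow UNIV. (-1) ^ card X *
        (\<Sum>\<phi>\<in>UNIV. (\<Prod>k\<in>UNIV. if \<phi> k \<in> X then 0 else 1) * D (A \<circ> \<phi>)))"
    by (intro sum.cong refl arg_cong2[where f="(*)"] is_mixed_discr_expand_finite[OF D A]) auto
  also have "\<dots> = (\<Sum>\<phi>\<in>UNIV. D (A \<circ> \<phi>) *
      (\<Sum>X\<in>Pow UNIV. (-1) ^ card X * (\<Prod>k\<in>UNIV. if \<phi> k \<in> X then 0 else 1)))"
    by (simp add: sum_distrib_left sum_distrib_right mult_ac) (rule sum.swap)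
  also have "\<dots> = (\<Sum>\<phi>\<in>UNIV. if surj \<phi> then D (A \<circ> \<phi>) else 0)"
    by (intro sum.cong refl) (simp add: alternating_sum_subsets_avoiding_range)
  also have "\<dots> = (\<Sum>\<phi> | \<phi> permutes UNIV. D (A \<circ> \<phi>))"
    by (simp add: sum.inter_filter[symmetric] permutes_UNIV_iff_surj)
  also have "\<dots> = fact CARD('n) * D A"
    by (simp add: sym card_permutations)
  finally show ?thesis by simp
qed

lemma mixed_discr_eq_expl:
  fixes A :: "'n::finite \<Rightarrow> real^'n^'n"
  assumes "psd_tuple A"
  shows "mixed_discr A = mixed_discr_expl A"
proof -
  have "fact CARD('n) * mixed_discr A = fact CARD('n) * mixed_discr_expl A"
    using is_mixed_discr_polarization[OF is_mixed_discr_mixed_discr assms]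
      is_mixed_discr_polarization[OF is_mixed_discr_expl assms]
    by (simp only:)
  then show ?thesis by simp
qed

lemma mixed_det_add: "mixed_det (A(k := X + Y)) = mixed_det (A(k := X)) + mixed_det (A(k := Y))"
proof -
  have row: "(\<chi> i. (A(k := Z)) i $ i) = (\<chi> i. if i = k then Z $ k else A i $ i)" for Z
    by (simp add: vec_eq_iff)
  show ?thesis
    unfolding mixed_det_def row vector_add_component by (rule det_row_add)
qed

lemma fun_upd_comp_permutes:
  assumes "\<sigma> permutes UNIV"
  shows "A(k := Z) \<circ> \<sigma> = (A \<circ> \<sigma>)(inv \<sigma> k := Z)"
  using permutes_inverses[OF assms] by (fastforce simp: o_def)

lemma mixed_discr_expl_add:
  "mixed_discr_expl (A(k := X + Y)) = mixed_discr_expl (A(k := X)) + mixed_discr_expl (A(k := Y))"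
  unfolding mixed_discr_expl_def
  by (simp add: fun_upd_comp_permutes mixed_det_add sum.distrib add_divide_distrib)

lemma mixed_discr_expl_outer:
  fixes v :: "'n::finite \<Rightarrow> real^'n"
  shows "mixed_discr_expl (\<lambda>k. outer (v k)) = (det (\<chi> k. v k))\<^sup>2 / fact CARD('n)"
proof -
  let ?V = "(\<chi> k. v k) :: real^'n^'n"
  have summand: "mixed_det ((\<lambda>k. outer (v k)) \<circ> \<sigma>) =
      (of_int (sign \<sigma>) * (\<Prod>i\<in>UNIV. ?V $ \<sigma> i $ i)) * det ?V"
    if \<sigma>: "\<sigma> permutes UNIV" for \<sigma>
  proof -
    have "mixed_det ((\<lambda>k. outer (v k)) \<circ> \<sigma>) = det (\<chi> i. v (\<sigma> i) $ i *s v (\<sigma> i))"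
      by (simp add: mixed_det_def outer_def scalar_mult_eq_scaleR)
    also have "\<dots> = (\<Prod>i\<in>UNIV. v (\<sigma> i) $ i) * det (\<chi> i. v (\<sigma> i))"
      by (rule det_rows_mul)
    also have "det (\<chi> i. v (\<sigma> i)) = of_int (sign \<sigma>) * det ?V"
      using det_permute_rows[OF \<sigma>, of ?V] by simp
    finally show ?thesis by (simp add: o_def mult_ac)
  qed
  have "(\<Sum>\<sigma> | \<sigma> permutes UNIV. mixed_det ((\<lambda>k. outer (v k)) \<circ> \<sigma>)) =
      (\<Sum>\<sigma> | \<sigma> permutes UNIV. of_int (sign \<sigma>) * (\<Prod>i\<in>UNIV. ?V $ \<sigma> i $ i)) * det ?V"
    unfolding sum_distrib_right by (rule sum.cong) (simp_all add: summand)
  also have "\<dots> = det (transpose ?V) * det ?V"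
    unfolding det_def by (simp add: transpose_def)
  finally show ?thesis
    by (simp add: mixed_discr_expl_def power2_eq_square)
qed

section \<open>Multiadditive functions on positive semidefinite tuples\<close>

definition psd_multiadditive :: "(('n::finite \<Rightarrow> real^'n^'n) \<Rightarrow> real) \<Rightarrow> bool" where
  "psd_multiadditive F \<longleftrightarrow> (\<forall>A k X Y. psd_tuple A \<longrightarrow> psd X \<longrightarrow> psd Y \<longrightarrow>
     F (A(k := X + Y)) = F (A(k := X)) + F (A(k := Y)))"

lemma psd_multiadditiveD:
  "psd_multiadditive F \<Longrightarrow> psd_tuple A \<Longrightarrow> psd X \<Longrightarrow> psd Y \<Longrightarrow>
    F (A(k := X + Y)) = F (A(k := X)) + F (A(k := Y))"
  unfolding psd_multiadditive_def by blast

lemma psd_multiadditiveI: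
  assumes "\<And>A k B. psd_tuple A \<Longrightarrow> psd B \<Longrightarrow> F (A(k := A k + B)) = F A + F (A(k := B))"
  shows "psd_multiadditive F"
  unfolding psd_multiadditive_def
  using assms by (metis fun_upd_same fun_upd_upd psd_tuple_upd)

lemma psd_multiadditive_mixed_discr_expl: "psd_multiadditive mixed_discr_expl"
  by (simp add: psd_multiadditive_def mixed_discr_expl_add)

lemma psd_multiadditive_scale: "psd_multiadditive F \<Longrightarrow> psd_multiadditive (\<lambda>A. a * F A)"
  by (simp add: psd_multiadditive_def distrib_left)

lemma psd_multiadditive_zero:
  assumes "psd_multiadditive F" "psd_tuple A"
  shows "F (A(k := 0)) = 0"
proof -
  have "F (A(k := 0)) = F (A(k := 0)) + F (A(k := 0))"
    using psd_multiadditiveD[OF assms psd_zero psd_zero, of k] by (simp only: add_0_left)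
  then show ?thesis by linarith
qed

lemma psd_multiadditive_sum_outer:
  fixes F :: "('n::finite \<Rightarrow> real^'n^'n) \<Rightarrow> real"
  assumes F: "psd_multiadditive F" and A: "psd_tuple A"
  shows "F (A(k := (\<Sum>u\<leftarrow>us. outer u))) = (\<Sum>u\<leftarrow>us. F (A(k := outer u)))"
proof (induction us)
  case Nil
  show ?case
    unfolding list.map sum_list.Nil by (rule psd_multiadditive_zero[OF F A])
next
  case (Cons u us)
  have "F (A(k := outer u + (\<Sum>w\<leftarrow>us. outer w))) =
      F (A(k := outer u)) + F (A(k := (\<Sum>w\<leftarrow>us. outer w)))"
    by (rule psd_multiadditiveD[OF F A psd_outer psd_sum_list]) (simp add: psd_outer)
  with Cons.IH show ?case by (simp only: list.map sum_list.Cons)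
qed

lemma psd_multiadditive_eqI:
  fixes F H :: "('n::finite \<Rightarrow> real^'n^'n) \<Rightarrow> real"
  assumes F: "psd_multiadditive F" and H: "psd_multiadditive H"
    and rank_one: "\<And>v. F (\<lambda>k. outer (v k)) = H (\<lambda>k. outer (v k))"
    and A: "psd_tuple A"
  shows "F A = H A"
proof -
  have "F A = H A" if "finite S" "psd_tuple A" "\<And>k. k \<notin> S \<Longrightarrow> \<exists>u. A k = outer u" for S A
    using that
  proof (induction S arbitrary: A rule: finite_induct)
    case empty
    then have "\<forall>k. \<exists>u. A k = outer u" by simp
    then obtain v where "\<forall>k. A k = outer (v k)" by metis
    then have "A = (\<lambda>k. outer (v k))" by blast
    then show ?case by (simp only: rank_one)
  next
    case (insert x S)
    obtain us where "A x = (\<Sum>u\<leftarrow>us. outer u)"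
      using psd_eq_sum_outer insert.prems(1) by (auto simp: psd_tuple_def)
    then have A_eq: "A(x := (\<Sum>u\<leftarrow>us. outer u)) = A" by auto
    have IH: "F (A(x := outer u)) = H (A(x := outer u))" for u
    proof (rule insert.IH)
      show "psd_tuple (A(x := outer u))"
        by (rule psd_tuple_upd[OF insert.prems(1) psd_outer])
      show "\<exists>w. (A(x := outer u)) k = outer w" if "k \<notin> S" for k
        using insert.prems(2)[of k] that by (cases "k = x") auto
    qed
    have "F A = (\<Sum>u\<leftarrow>us. F (A(x := outer u)))"
      using psd_multiadditive_sum_outer[OF F insert.prems(1), of x us] unfolding A_eq .
    also have "\<dots> = (\<Sum>u\<leftarrow>us. H (A(x := outer u)))"
      by (simp only: IH)
    also have "\<dots> = H A"
      using psd_multiadditive_sum_outer[OF H insert.prems(1), of x us] unfolding A_eq ..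
    finally show ?case .
  qed
  from this[of UNIV A] A show ?thesis by simp
qed

section \<open>Two functional equations\<close>

lemma additive_nonneg_imp_linear:
  fixes f :: "real \<Rightarrow> real"
  assumes add: "\<And>s r. 0 \<le> s \<Longrightarrow> 0 \<le> r \<Longrightarrow> f (s + r) = f s + f r"
    and nonneg: "\<And>s. 0 \<le> s \<Longrightarrow> 0 \<le> f s"
    and t: "0 \<le> t"
  shows "f t = t * f 1"
proof -
  have mono: "f s \<le> f r" if "0 \<le> s" "s \<le> r" for s r
    using add[of s "r - s"] nonneg[of "r - s"] that by simp
  have mult: "f (real n * s) = real n * f s" if "0 \<le> s" for n s
  proof (induction n)
    case 0
    then show ?case using add[of 0 0] by simp
  next
    case (Suc n)
    then show ?case using add[of "real n * s" s] that by (simp add: algebra_simps)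
  qed
  have close: "\<bar>f t - t * f 1\<bar> \<le> f 1 / real n" if "n \<ge> 1" for n :: nat
  proof -
    have n: "real n > 0" using that by simp
    have grid: "f (real k / real n) = real k * f 1 / real n" for k
      using mult[of "1 / real n" k] mult[of "1 / real n" n] n by simp
    define m where "m = nat \<lfloor>real n * t\<rfloor>"
    have lower: "real m / real n \<le> t" and upper: "t \<le> real (Suc m) / real n"
      using t n unfolding m_def by (simp_all add: field_simps) linarith
    have "real m * f 1 / real n \<le> f t" "f t \<le> real (Suc m) * f 1 / real n"
      using mono[OF _ lower] mono[OF _ upper] t grid[of m] grid[of "Suc m"] by simp_all
    moreover have "real m * f 1 / real n \<le> t * f 1" "t * f 1 \<le> real (Suc m) * f 1 / real n"
      using mult_right_mono[OF lower, of "f 1"] mult_right_mono[OF upper, of "f 1"] nonneg[of 1]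
      by simp_all
    ultimately show ?thesis
      by (simp add: abs_le_iff add_divide_distrib algebra_simps)
  qed
  have "\<bar>f t - t * f 1\<bar> \<le> 0"
    by (rule LIMSEQ_le_const[OF lim_const_over_n[of "f 1"]]) (use close in auto)
  then show ?thesis by simp
qed

text \<open>A solution is affine along every line through \<open>0\<close>, and nonnegativity on the whole line
  forces the slope to vanish.\<close>
lemma jensen_nonneg_imp_const:
  fixes \<phi> :: "real \<Rightarrow> real"
  assumes jensen: "\<And>s r. \<phi> (s + r) + \<phi> (s - r) = 2 * \<phi> s"
    and nonneg: "\<And>x. 0 \<le> \<phi> x"
  shows "\<phi> t = \<phi> 0"
proof -
  have affine: "\<phi> (real k * x) = \<phi> 0 + real k * (\<phi> x - \<phi> 0)" for k x
  proof -
    have "\<phi> (real k * x) = \<phi> 0 + real k * (\<phi> x - \<phi> 0) \<and>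
        \<phi> (real (Suc k) * x) = \<phi> 0 + real (Suc k) * (\<phi> x - \<phi> 0)"
    proof (induction k)
      case (Suc k)
      then show ?case
        using jensen[of "real (Suc k) * x" x] by (simp add: algebra_simps)
    qed simp
    then show ?thesis ..
  qed
  have reflect: "\<phi> (- t) - \<phi> 0 = - (\<phi> t - \<phi> 0)"
    using jensen[of 0 t] by simp
  define \<delta> where "\<delta> = \<phi> t - \<phi> 0"
  have bounded: "real k * \<bar>\<delta>\<bar> \<le> \<phi> 0" for k
  proof -
    have "0 \<le> \<phi> 0 + real k * \<delta>" "0 \<le> \<phi> 0 - real k * \<delta>"
      using nonneg[of "real k * t"] nonneg[of "real k * - t"] affine[of k t] affine[of k "- t"] reflect
      by (simp_all add: \<delta>_def algebra_simps)
    then have "\<bar>real k * \<delta>\<bar> \<le> \<phi> 0" by (simp add: abs_le_iff)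
    then show ?thesis by (simp add: abs_mult)
  qed
  have "\<delta> = 0"
  proof (rule ccontr)
    assume "\<delta> \<noteq> 0"
    then obtain k where "\<phi> 0 < real k * \<bar>\<delta>\<bar>"
      using ex_less_of_nat_mult[of "\<bar>\<delta>\<bar>" "\<phi> 0"] by auto
    with bounded[of k] show False by simp
  qed
  then show ?thesis by (simp add: \<delta>_def)
qed

section \<open>Functions dominated by the mixed discriminant\<close>

lemma psd_multiadditive_homogeneous:
  fixes F :: "('n::finite \<Rightarrow> real^'n^'n) \<Rightarrow> real"
  assumes F: "psd_multiadditive F" and nonneg: "\<And>A. psd_tuple A \<Longrightarrow> 0 \<le> F A"
    and A: "psd_tuple A" and X: "psd X" and t: "0 \<le> t"
  shows "F (A(k := t *\<^sub>R X)) = t * F (A(k := X))"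
proof -
  have "F (A(k := t *\<^sub>R X)) = t * F (A(k := 1 *\<^sub>R X))"
  proof (rule additive_nonneg_imp_linear[where f="\<lambda>t. F (A(k := t *\<^sub>R X))", OF _ _ t])
    fix s r :: real
    assume "0 \<le> s" "0 \<le> r"
    then show "F (A(k := (s + r) *\<^sub>R X)) = F (A(k := s *\<^sub>R X)) + F (A(k := r *\<^sub>R X))"
      using psd_multiadditiveD[OF F A psd_scaleR[OF _ X] psd_scaleR[OF _ X]]
      by (simp add: scaleR_add_left)
  next
    fix s :: real
    assume "0 \<le> s"
    then show "0 \<le> F (A(k := s *\<^sub>R X))"
      by (intro nonneg psd_tuple_upd[OF A] psd_scaleR[OF _ X])
  qed
  then show ?thesis by simp
qed

definition row_combination :: "real^'n^'n \<Rightarrow> ('n \<Rightarrow> 'a::real_vector) \<Rightarrow> 'n \<Rightarrow> 'a" where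
  "row_combination A v k = (\<Sum>j\<in>UNIV. A $ k $ j *\<^sub>R v j)"

lemma row_combination_zero_row:
  fixes v :: "'n::finite \<Rightarrow> real^'n"
  assumes "row i A = 0"
  shows "row i (\<chi> k. row_combination A v k) = 0"
  using assms by (simp add: row_def vec_eq_iff row_combination_def)

lemma row_combination_diagonal:
  assumes "\<And>i j. i \<noteq> j \<Longrightarrow> A $ i $ j = 0"
  shows "row_combination A v = (\<lambda>k. A $ k $ k *\<^sub>R v k)"
proof
  fix k
  have "row_combination A v k = (\<Sum>j\<in>UNIV. if j = k then A $ k $ k *\<^sub>R v k else 0)"
    unfolding row_combination_def using assms by (intro sum.cong) auto
  then show "row_combination A v k = A $ k $ k *\<^sub>R v k" by simp
qed

lemma row_combination_swap_cols:
  "row_combination (\<chi> i j. A $ i $ Transposition.transpose m n j) v =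
    row_combination A (\<lambda>j. v (Transposition.transpose m n j))"
proof
  fix k
  let ?\<tau> = "Transposition.transpose m n"
  show "row_combination (\<chi> i j. A $ i $ ?\<tau> j) v k = row_combination A (\<lambda>j. v (?\<tau> j)) k"
    unfolding row_combination_def
    using sum.permute[OF permutes_swap_id[of m UNIV n], of "\<lambda>j. A $ k $ j *\<^sub>R v (?\<tau> j)"]
    by (simp add: o_def)
qed

lemma row_combination_row_operation:
  "row_combination (\<chi> i. if i = m then row m A + c *\<^sub>R row n A else row i A) v =
    (row_combination A v)(m := row_combination A v m + c *\<^sub>R row_combination A v n)"
  by (auto simp: row_combination_def row_def scaleR_add_left scaleR_sum_right sum.distrib)

locale dominated_by_mixed_discr =
  fixes F :: "('n::finite \<Rightarrow> real^'n^'n) \<Rightarrow> real" and c :: real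
  assumes nonneg: "\<And>A. psd_tuple A \<Longrightarrow> 0 \<le> F A"
    and multiadditive: "psd_multiadditive F"
    and dominated: "\<And>A. psd_tuple A \<Longrightarrow> F A \<le> c * mixed_discr A"
begin

definition rank_one :: "('n \<Rightarrow> real^'n) \<Rightarrow> real" where
  "rank_one v = F (\<lambda>k. outer (v k))"

lemma rank_one_nonneg: "0 \<le> rank_one v"
  unfolding rank_one_def by (rule nonneg[OF psd_tuple_outer])

lemma rank_one_singular: "det (\<chi> k. v k) = 0 \<Longrightarrow> rank_one v = 0"
  using dominated[OF psd_tuple_outer, of v] rank_one_nonneg[of v]
  by (simp add: rank_one_def mixed_discr_eq_expl[OF psd_tuple_outer] mixed_discr_expl_outer)

lemma rank_one_scaleR: "rank_one (v(k := t *\<^sub>R w)) = t\<^sup>2 * rank_one (v(k := w))"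
  unfolding rank_one_def outer_fun_upd outer_scaleR
  by (rule psd_multiadditive_homogeneous[OF multiadditive nonneg psd_tuple_outer psd_outer zero_le_power2])

lemma rank_one_parallelogram:
  "rank_one (v(k := a + b)) + rank_one (v(k := a - b)) =
    2 * rank_one (v(k := a)) + 2 * rank_one (v(k := b))"
proof -
  let ?V = "\<lambda>j. outer (v j)"
  have "rank_one (v(k := a + b)) + rank_one (v(k := a - b)) =
      F (?V(k := outer (a + b) + outer (a - b)))"
    unfolding rank_one_def outer_fun_upd
    by (rule psd_multiadditiveD[OF multiadditive psd_tuple_outer psd_outer psd_outer, symmetric])
  also have "\<dots> = F (?V(k := 2 *\<^sub>R outer a)) + F (?V(k := 2 *\<^sub>R outer b))"
    unfolding outer_parallelogram
    by (intro psd_multiadditiveD[OF multiadditive psd_tuple_outer] psd_scaleR psd_outer) simp_all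
  also have "\<dots> = 2 * rank_one (v(k := a)) + 2 * rank_one (v(k := b))"
    unfolding rank_one_def outer_fun_upd
    by (simp add: psd_multiadditive_homogeneous[OF multiadditive nonneg psd_tuple_outer psd_outer])
  finally show ?thesis .
qed

text \<open>Along \<open>s \<mapsto> v(m := v m + s v n)\<close> the parallelogram law becomes Jensen's equation, because
  the correction term has two equal rows and so vanishes.\<close>
lemma rank_one_shear:
  assumes "m \<noteq> n"
  shows "rank_one (v(m := v m + t *\<^sub>R v n)) = rank_one v"
proof -
  define \<phi> where "\<phi> s = rank_one (v(m := v m + s *\<^sub>R v n))" for s
  have singular: "rank_one (v(m := r *\<^sub>R v n)) = 0" for r
  proof (rule rank_one_singular)
    have "(\<chi> k. (v(m := r *\<^sub>R v n)) k) = (\<chi> k. if k = m then r *s v n else v k)"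
      by (simp add: vec_eq_iff scalar_mult_eq_scaleR)
    moreover have "det (\<chi> k. if k = m then v n else v k) = 0"
      using assms by (intro det_identical_rows[of m n]) (simp_all add: row_def vec_eq_iff)
    ultimately show "det (\<chi> k. (v(m := r *\<^sub>R v n)) k) = 0"
      by (simp add: det_row_mul)
  qed
  have "\<phi> (s + r) + \<phi> (s - r) = 2 * \<phi> s" for s r
    using rank_one_parallelogram[of v m "v m + s *\<^sub>R v n" "r *\<^sub>R v n"]
    by (simp add: \<phi>_def singular algebra_simps)
  then have "\<phi> t = \<phi> 0"
    by (rule jensen_nonneg_imp_const) (simp add: \<phi>_def rank_one_nonneg)
  then show ?thesis by (simp add: \<phi>_def)
qed

lemma rank_one_swap:
  assumes mn: "m \<noteq> n"
  shows "rank_one (\<lambda>k. v (Transposition.transpose m n k)) = rank_one v"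
proof -
  define v1 where "v1 = v(m := v m + 1 *\<^sub>R v n)"
  define v2 where "v2 = v1(n := v1 n + (-1) *\<^sub>R v1 m)"
  define v3 where "v3 = v2(m := v2 m + 1 *\<^sub>R v2 n)"
  have "rank_one v1 = rank_one v"
    unfolding v1_def by (rule rank_one_shear[OF mn])
  moreover have "rank_one v2 = rank_one v1"
    unfolding v2_def using mn by (intro rank_one_shear) simp
  moreover have "rank_one v3 = rank_one v2"
    unfolding v3_def by (rule rank_one_shear[OF mn])
  moreover have "v3 = v(m := v n, n := - v m)"
    using mn by (auto simp: v1_def v2_def v3_def)
  moreover have "rank_one (v(m := v n, n := (-1) *\<^sub>R (- v m))) = rank_one (v(m := v n, n := - v m))"
    using rank_one_scaleR[of "v(m := v n)" n "-1" "- v m"] by simp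
  moreover have "v(m := v n, n := (-1) *\<^sub>R (- v m)) = (\<lambda>k. v (Transposition.transpose m n k))"
    using mn by (auto simp: transpose_def)
  ultimately show ?thesis by simp
qed

lemma rank_one_diagonal: "rank_one (\<lambda>k. d k *\<^sub>R v k) = (\<Prod>k\<in>UNIV. d k)\<^sup>2 * rank_one v"
proof -
  have "rank_one (\<lambda>k. if k \<in> S then d k *\<^sub>R v k else v k) = (\<Prod>k\<in>S. d k)\<^sup>2 * rank_one v"
    if "finite S" for S
    using that
  proof (induction S rule: finite_induct)
    case (insert x S)
    let ?w = "\<lambda>k. if k \<in> S then d k *\<^sub>R v k else v k"
    have "(\<lambda>k. if k \<in> insert x S then d k *\<^sub>R v k else v k) = ?w(x := d x *\<^sub>R v x)"
      and "?w(x := v x) = ?w"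
      using insert.hyps by auto
    then show ?case
      using rank_one_scaleR[of ?w x "d x" "v x"] insert by (simp add: power_mult_distrib)
  qed simp
  from this[of UNIV] show ?thesis by simp
qed

text \<open>Gaussian elimination: every matrix is built from diagonal ones and matrices with a zero row
  by column swaps and row operations, each of which scales \<open>rank_one\<close> by the square of the
  determinant.\<close>
lemma rank_one_row_combination: "rank_one (row_combination A v) = (det A)\<^sup>2 * rank_one v"
proof -
  have "\<forall>v. rank_one (row_combination A v) = (det A)\<^sup>2 * rank_one v"
  proof (rule induct_matrix_row_operations)
    fix A :: "real^'n^'n" and i :: 'n
    assume zero: "row i A = 0"
    have "rank_one (row_combination A v) = 0" for v
      by (rule rank_one_singular, rule det_zero_row(1)[OF row_combination_zero_row[OF zero]])
    then show "\<forall>v. rank_one (row_combination A v) = (det A)\<^sup>2 * rank_one v"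
      by (simp add: det_zero_row(1)[OF zero])
  next
    fix A :: "real^'n^'n"
    assume "\<And>i j. i \<noteq> j \<Longrightarrow> A $ i $ j = 0"
    then show "\<forall>v. rank_one (row_combination A v) = (det A)\<^sup>2 * rank_one v"
      by (simp add: row_combination_diagonal rank_one_diagonal det_diagonal)
  next
    fix A :: "real^'n^'n" and m n :: 'n
    assume "\<forall>v. rank_one (row_combination A v) = (det A)\<^sup>2 * rank_one v" "m \<noteq> n"
    then show "\<forall>v. rank_one (row_combination (\<chi> i j. A $ i $ Transposition.transpose m n j) v) =
        (det (\<chi> i j. A $ i $ Transposition.transpose m n j))\<^sup>2 * rank_one v"
      by (simp add: row_combination_swap_cols rank_one_swap sign_swap_id
          det_permute_columns[OF permutes_swap_id])
  next
    fix A :: "real^'n^'n" and m n :: 'n and c :: real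
    assume IH: "\<forall>v. rank_one (row_combination A v) = (det A)\<^sup>2 * rank_one v" and "m \<noteq> n"
    have "det (\<chi> i. if i = m then row m A + c *\<^sub>R row n A else row i A) = det A"
      using det_row_operation[OF \<open>m \<noteq> n\<close>, of A c] unfolding scalar_mult_eq_scaleR .
    then show "\<forall>v. rank_one (row_combination
          (\<chi> i. if i = m then row m A + c *\<^sub>R row n A else row i A) v) =
        (det (\<chi> i. if i = m then row m A + c *\<^sub>R row n A else row i A))\<^sup>2 * rank_one v"
      using IH \<open>m \<noteq> n\<close> by (simp add: row_combination_row_operation rank_one_shear)
  qed
  then show ?thesis by blast
qed

lemma rank_one_eq_det_squared: "rank_one v = (det (\<chi> k. v k))\<^sup>2 * rank_one (\<lambda>k. axis k 1)"
proof -
  have "v k = (\<Sum>j\<in>UNIV. v k $ j *\<^sub>R axis j 1)" for k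
    using basis_expansion[of "v k"] by (simp add: scalar_mult_eq_scaleR)
  then have "row_combination (\<chi> k. v k) (\<lambda>j. axis j 1) = v"
    by (auto simp: row_combination_def)
  then show ?thesis
    using rank_one_row_combination[of "\<chi> k. v k" "\<lambda>j. axis j 1"] by simp
qed

theorem eq_mixed_discr:
  assumes "psd_tuple A"
  shows "F A = (fact CARD('n) * rank_one (\<lambda>k. axis k 1)) * mixed_discr A"
proof -
  let ?a = "fact CARD('n) * rank_one (\<lambda>k. axis k 1)"
  have "F (\<lambda>k. outer (v k)) = ?a * mixed_discr_expl (\<lambda>k. outer (v k))" for v
    using rank_one_eq_det_squared[of v] by (simp add: rank_one_def mixed_discr_expl_outer)
  then have "F A = ?a * mixed_discr_expl A"
    by (intro psd_multiadditive_eqI[OF multiadditive _ _ assms]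
        psd_multiadditive_scale psd_multiadditive_mixed_discr_expl)
  then show ?thesis by (simp add: mixed_discr_eq_expl[OF assms])
qed

end

theorem corollary3:
  fixes F :: "('n::finite \<Rightarrow> real^'n^'n) \<Rightarrow> real"
  assumes nonneg: "\<And>A. psd_tuple A \<Longrightarrow> 0 \<le> F A"
    and additive: "\<And>A k B. psd_tuple A \<Longrightarrow> psd B \<Longrightarrow>
                     F (A(k := A k + B)) = F A + F (A(k := B))"
    and bound: "\<exists>c. \<forall>A. psd_tuple A \<longrightarrow> F A \<le> c * mixed_discr A"
  shows "\<exists>a. \<forall>A. psd_tuple A \<longrightarrow> F A = a * mixed_discr A"
proof -
  obtain c where c: "\<And>A. psd_tuple A \<Longrightarrow> F A \<le> c * mixed_discr A"
    using bound by blast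
  have "psd_multiadditive F"
    using additive by (rule psd_multiadditiveI)
  then interpret dominated_by_mixed_discr F c
    using nonneg c by unfold_locales
  show ?thesis using eq_mixed_discr by blast
qed

end
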